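(* Let $f:\mathcal X^n\to\mathcal T$ with $\mathcal T$ finite, let $\varepsilon>0$, and let $M$ be an $\varepsilon$-differentially private mechanism with values in $\mathcal T$. Then $$\inf_{x\in\mathcal X^n}\mathbb P(M(x)=f(x))\le \inf_{x\in\mathcal X^n}\frac{1}{\sum_{t\in\mathcal T}e^{-\mathrm{len}_f(x;t)\varepsilon}}.$$ If in addition $M$ is $L_{0,1}$-unbiased, where $L_{0,1}(s,t)=\mathbf 1\{s\neq t\}$, then for every $x\in\mathcal X^n$, $$\mathbb P(M(x)=f(x))\le \frac{1}{\sum_{t\in\mathcal T}e^{-2\,\mathrm{len}_f(x;t)\varepsilon}}.$$
   Context: For $x=(x_1,\dots,x_n),x'\in\mathcal X^n$, $d_H(x,x')=|\{i:x_i\neq x_i'\}|$ is the Hamming distance; $x,x'$ are neighboring if $d_H(x,x')\le 1$. A mechanism is a randomized map $M$ from $\mathcal X^n$ to a measurable space; $M$ is $(\varepsilon,\delta)$-differentially private if for all neighboring $x,x'$ and all measurable $S$, $\mathbb P(M(x)\in S)\le e^{\varepsilon}\mathbb P(M(x')\in S)+\delta$, and $\varepsilon$-differentially private if this holds with $\delta=0$. The inverse sensitivity is $\mathrm{len}_f(x;t)=\inf\{d_H(x,x'):x'\in\mathcal X^n,\ f(x')=t\}$, with $\inf\emptyset=+\infty$ and $e^{-\infty}=0$. For a loss $L:\mathcal T\times\mathcal T\to\mathbb R_+$, a mechanism $M$ is $L$-unbiased if $\mathbb E[L(M(x),f(x))]\le \mathbb E[L(M(x),t)]$ for all $x\in\mathcal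 X^n$ and $t\in\mathcal T$; for $L_{0,1}$ this means $\mathbb P(M(x)=f(x))\ge \mathbb P(M(x)=t)$ for all $t$. *)

theory Defs
  imports "HOL-Probability.Probability"
begin

text \<open>Datasets in X^n are lists of length n over the type 'a (= X).
  A mechanism with values in the finite set T (a finite type 't) is a map to
  probability mass functions on 't (all subsets measurable).\<close>

definition datasets :: "nat \<Rightarrow> 'a list set" where
  "datasets n = {x. length x = n}"

definition hamming :: "'a list \<Rightarrow> 'a list \<Rightarrow> nat" where
  "hamming x x' = card {i. i < length x \<and> x ! i \<noteq> x' ! i}"

definition neighboring :: "'a list \<Rightarrow> 'a list \<Rightarrow> bool" where
  "neighboring x x' \<longleftrightarrow> hamming x x' \<le> 1"

definition pure_dp :: "nat \<Rightarrow> real \<Rightarrow> ('a list \<Rightarrow> 't pmf) \<Rightarrow> bool" where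
  "pure_dp n \<epsilon> M \<longleftrightarrow>
     (\<forall>x\<in>datasets n. \<forall>x'\<in>datasets n. neighboring x x' \<longrightarrow>
        (\<forall>S. measure_pmf.prob (M x) S \<le> exp \<epsilon> * measure_pmf.prob (M x') S))"

text \<open>Inverse sensitivity, valued in extended naturals (INF of the empty set is \<infinity>).\<close>
definition inv_len :: "nat \<Rightarrow> ('a list \<Rightarrow> 't) \<Rightarrow> 'a list \<Rightarrow> 't \<Rightarrow> enat" where
  "inv_len n f x t = (INF x'\<in>{x'\<in>datasets n. f x' = t}. enat (hamming x x'))"

text \<open>e^{-len * c}, with e^{-\<infinity>} = 0.\<close>
definition exp_neg_len :: "enat \<Rightarrow> real \<Rightarrow> real" where
  "exp_neg_len l c = (case l of enat k \<Rightarrow> exp (- (real k) * c) | \<infinity> \<Rightarrow> 0)"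

definition unbiased :: "nat \<Rightarrow> ('t \<Rightarrow> 't \<Rightarrow> real) \<Rightarrow> ('a list \<Rightarrow> 't) \<Rightarrow> ('a list \<Rightarrow> 't pmf) \<Rightarrow> bool" where
  "unbiased n L f M \<longleftrightarrow>
     (\<forall>x\<in>datasets n. \<forall>t.
        measure_pmf.expectation (M x) (\<lambda>s. L s (f x)) \<le> measure_pmf.expectation (M x) (\<lambda>s. L s t))"

definition L01 :: "'t \<Rightarrow> 't \<Rightarrow> real" where
  "L01 s t = (if s \<noteq> t then 1 else 0)"

end

theory Submission
  imports Defs
begin

text \<open>Group privacy: along a path of hamming x x' neighbouring datasets from x to x',
  each step costs a factor e^\<epsilon>. If t has inverse sensitivity k at x, then t = f(x') for some
  x' at distance k, so any lower bound m on the probability of M(x') hitting f(x') yields mass at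
  least m e^{-k\<epsilon>} on t under M(x); as these masses sum to at most 1, m is at most the inverse
  of the sum. Under L01-unbiasedness f(x') is a mode of M(x'), so the bound can start from
  P(M(x) = f(x)) itself, at the price of a path back from x', whence the factor 2.\<close>

lemma hamming_self [simp]: "hamming x x = 0"
  unfolding hamming_def by simp

lemma hamming_commute: "length x = length x' \<Longrightarrow> hamming x x' = hamming x' x"
  unfolding hamming_def by metis

lemma hamming_eq_0_iff: "length x = length x' \<Longrightarrow> hamming x x' = 0 \<longleftrightarrow> x = x'"
  unfolding hamming_def by (auto simp: card_eq_0_iff intro: nth_equalityI)

lemma hamming_Suc_imp_neighbor_step:
  assumes "hamming x x' = Suc j"
  obtains y where "length y = length x" "neighboring x y" "hamming y x' = j"
proof -
  define D where "D = {i. i < length x \<and> x ! i \<noteq> x' ! i}"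
  have card_D: "card D = Suc j" using assms unfolding D_def hamming_def by simp
  then obtain i where i: "i \<in> D" by fastforce
  define y where "y = x[i := x' ! i]"
  have "{k. k < length x \<and> x ! k \<noteq> y ! k} \<subseteq> {i}"
    using i unfolding y_def D_def by (auto simp: nth_list_update)
  then have "hamming x y \<le> 1"
    unfolding hamming_def by (metis card.empty card.insert card_mono empty_iff finite.intros One_nat_def)
  moreover have "{k. k < length y \<and> y ! k \<noteq> x' ! k} = D - {i}"
    using i unfolding y_def D_def by (auto simp: nth_list_update)
  then have "hamming y x' = j"
    unfolding hamming_def using card_D i by (simp add: D_def)
  ultimately show thesis
    using that[of y] by (simp add: y_def neighboring_def)
qed

lemma pure_dp_group_privacy:
  assumes dp: "pure_dp n \<epsilon> M" and x: "x \<in> datasets n" and x': "x' \<in> datasets n"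
  shows "measure_pmf.prob (M x) S \<le> exp (real (hamming x x') * \<epsilon>) * measure_pmf.prob (M x') S"
  using x
proof (induction "hamming x x'" arbitrary: x)
  case 0
  then have "x = x'" using x' by (simp add: hamming_eq_0_iff datasets_def)
  then show ?case by simp
next
  case (Suc j x)
  obtain y where y: "length y = length x" "neighboring x y" "hamming y x' = j"
    using hamming_Suc_imp_neighbor_step[OF Suc.hyps(2)[symmetric]] by blast
  have y_data: "y \<in> datasets n" using Suc.prems y(1) by (simp add: datasets_def)
  have "measure_pmf.prob (M x) S \<le> exp \<epsilon> * measure_pmf.prob (M y) S"
    using dp Suc.prems y_data y(2) unfolding pure_dp_def by blast
  also have "\<dots> \<le> exp \<epsilon> * (exp (real j * \<epsilon>) * measure_pmf.prob (M x') S)"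
    using Suc.hyps(1)[OF y(3)[symmetric] y_data] y(3) by simp
  also have "\<dots> = exp (real (hamming x x') * \<epsilon>) * measure_pmf.prob (M x') S"
    by (simp add: Suc.hyps(2)[symmetric] distrib_right exp_add)
  finally show ?case .
qed

lemma inv_len_self:
  assumes "x \<in> datasets n" shows "inv_len n f x (f x) = 0"
proof -
  have "inv_len n f x (f x) \<le> enat (hamming x x)"
    unfolding inv_len_def using assms by (intro INF_lower) auto
  then show ?thesis by (simp add: zero_enat_def[symmetric])
qed

lemma inv_len_attained:
  assumes "inv_len n f x t = enat k"
  obtains x' where "x' \<in> datasets n" "f x' = t" "hamming x x' = k"
proof -
  let ?A = "(\<lambda>x'. enat (hamming x x')) ` {x'\<in>datasets n. f x' = t}"
  have "?A \<noteq> {}"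
    using assms unfolding inv_len_def by (metis Inf_empty infinity_ne_i0 top_enat_def enat.distinct(2))
  then have "Inf ?A \<in> ?A" by (meson ex_in_conv wellorder_InfI)
  then show ?thesis using assms that unfolding inv_len_def by auto
qed

lemma le_inverse_sum_exp_neg_len:
  fixes p :: "'t::finite pmf" and l :: "'t \<Rightarrow> enat"
  assumes l0: "l t0 = 0"
    and mass: "\<And>t k. l t = enat k \<Longrightarrow> m \<le> exp (real k * c) * pmf p t"
  shows "m \<le> 1 / (\<Sum>t\<in>UNIV. exp_neg_len (l t) c)"
proof -
  let ?S = "\<Sum>t\<in>UNIV. exp_neg_len (l t) c"
  have nonneg: "exp_neg_len (l t) c \<ge> 0" for t
    unfolding exp_neg_len_def by (auto split: enat.split)
  have "1 = exp_neg_len (l t0) c"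
    using l0 by (simp add: exp_neg_len_def zero_enat_def)
  also have "\<dots> \<le> ?S"
    by (rule member_le_sum) (auto intro: nonneg)
  finally have S_ge_1: "1 \<le> ?S" .
  have "m * exp_neg_len (l t) c \<le> pmf p t" for t
  proof (cases "l t")
    case (enat k)
    then have "m * exp (- real k * c) \<le> exp (real k * c) * pmf p t * exp (- real k * c)"
      using mass by (simp add: mult_right_mono)
    then show ?thesis using enat by (simp add: exp_neg_len_def exp_minus field_simps)
  qed (simp add: exp_neg_len_def)
  then have "m * ?S \<le> (\<Sum>t\<in>UNIV. pmf p t)"
    by (simp add: sum_distrib_left sum_mono)
  also have "\<dots> = 1" by (rule sum_pmf_eq_1) auto
  finally show ?thesis using S_ge_1 by (simp add: field_simps)
qed

lemma le_inverse_sum_exp_neg_inv_len: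
  fixes p :: "'t::finite pmf"
  assumes x: "x \<in> datasets n"
    and mass: "\<And>x'. x' \<in> datasets n \<Longrightarrow> m \<le> exp (real (hamming x x') * c) * pmf p (f x')"
  shows "m \<le> 1 / (\<Sum>t\<in>UNIV. exp_neg_len (inv_len n f x t) c)"
proof (rule le_inverse_sum_exp_neg_len)
  show "inv_len n f x (f x) = 0" using x by (rule inv_len_self)
  fix t k assume "inv_len n f x t = enat k"
  then obtain x' where "x' \<in> datasets n" "f x' = t" "hamming x x' = k"
    by (rule inv_len_attained)
  then show "m \<le> exp (real k * c) * pmf p t" using mass by blast
qed

lemma expectation_L01: "measure_pmf.expectation p (\<lambda>s. L01 s t) = 1 - pmf p t"
proof -
  have "(\<lambda>s. L01 s t) = indicator (- {t})" by (auto simp: L01_def fun_eq_iff)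
  then have "measure_pmf.expectation p (\<lambda>s. L01 s t) = measure_pmf.prob p (UNIV - {t})"
    by (simp add: Compl_eq_Diff_UNIV)
  then show ?thesis
    by (simp add: measure_pmf.prob_compl[of "{t}", simplified] measure_pmf_single)
qed

lemma unbiased_L01_mode:
  assumes "unbiased n L01 f M" and "x \<in> datasets n"
  shows "pmf (M x) t \<le> pmf (M x) (f x)"
  using assms unfolding unbiased_def expectation_L01 by fastforce

lemma pure_dp_pmf_le:
  assumes "pure_dp n \<epsilon> M" "x \<in> datasets n" "x' \<in> datasets n"
  shows "pmf (M x) t \<le> exp (real (hamming x x') * \<epsilon>) * pmf (M x') t"
  using pure_dp_group_privacy[OF assms, of "{t}"] by (simp add: measure_pmf_single)

lemma pure_dp_min_accuracy_bound:
  fixes M :: "'a list \<Rightarrow> 't::finite pmf" and f :: "'a list \<Rightarrow> 't"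
  assumes dp: "pure_dp n \<epsilon> M" and x: "x \<in> datasets n"
  shows "(INF y\<in>datasets n. measure_pmf.prob (M y) {f y})
           \<le> 1 / (\<Sum>t\<in>UNIV. exp_neg_len (inv_len n f x t) \<epsilon>)"
proof (rule le_inverse_sum_exp_neg_inv_len[OF x])
  fix x' :: "'a list" assume x': "x' \<in> datasets n"
  have "(INF y\<in>datasets n. measure_pmf.prob (M y) {f y}) \<le> measure_pmf.prob (M x') {f x'}"
    using x' by (intro cINF_lower bdd_belowI[of _ 0]) auto
  also have "\<dots> = pmf (M x') (f x')"
    by (simp add: measure_pmf_single)
  also have "\<dots> \<le> exp (real (hamming x x') * \<epsilon>) * pmf (M x) (f x')"
    using pure_dp_pmf_le[OF dp x' x] hamming_commute[of x x'] x x'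
    by (simp add: datasets_def)
  finally show "(INF y\<in>datasets n. measure_pmf.prob (M y) {f y})
                  \<le> exp (real (hamming x x') * \<epsilon>) * pmf (M x) (f x')" .
qed

lemma pure_dp_unbiased_accuracy_bound:
  fixes M :: "'a list \<Rightarrow> 't::finite pmf" and f :: "'a list \<Rightarrow> 't"
  assumes dp: "pure_dp n \<epsilon> M" and ub: "unbiased n L01 f M" and x: "x \<in> datasets n"
  shows "measure_pmf.prob (M x) {f x} \<le> 1 / (\<Sum>t\<in>UNIV. exp_neg_len (inv_len n f x t) (2 * \<epsilon>))"
  unfolding measure_pmf_single
proof (rule le_inverse_sum_exp_neg_inv_len[OF x])
  fix x' :: "'a list" assume x': "x' \<in> datasets n"
  let ?e = "exp (real (hamming x x') * \<epsilon>)"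
  have "pmf (M x) (f x) \<le> ?e * pmf (M x') (f x)"
    using pure_dp_pmf_le[OF dp x x'] .
  also have "\<dots> \<le> ?e * pmf (M x') (f x')"
    using unbiased_L01_mode[OF ub x'] by (simp add: mult_left_mono)
  also have "\<dots> \<le> ?e * (?e * pmf (M x) (f x'))"
    using pure_dp_pmf_le[OF dp x' x] hamming_commute[of x x'] x x'
    by (simp add: datasets_def mult_left_mono)
  also have "\<dots> = exp (real (hamming x x') * (2 * \<epsilon>)) * pmf (M x) (f x')"
    by (simp add: exp_add[symmetric] algebra_simps)
  finally show "pmf (M x) (f x) \<le> exp (real (hamming x x') * (2 * \<epsilon>)) * pmf (M x) (f x')" .
qed

theorem proposition2p1:
  fixes n :: nat and f :: "'a list \<Rightarrow> 't::finite" and M :: "'a list \<Rightarrow> 't pmf"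
    and \<epsilon> :: real
  assumes "\<epsilon> > 0" and "pure_dp n \<epsilon> M"
  shows "(INF x\<in>datasets n. measure_pmf.prob (M x) {f x})
           \<le> (INF x\<in>datasets n. 1 / (\<Sum>t\<in>UNIV. exp_neg_len (inv_len n f x t) \<epsilon>))
         \<and> (unbiased n L01 f M \<longrightarrow>
         (\<forall>x\<in>datasets n. measure_pmf.prob (M x) {f x}
            \<le> 1 / (\<Sum>t\<in>UNIV. exp_neg_len (inv_len n f x t) (2 * \<epsilon>))))"
proof (intro conjI impI ballI)
  have "replicate n undefined \<in> datasets n" by (simp add: datasets_def)
  then show "(INF x\<in>datasets n. measure_pmf.prob (M x) {f x})
               \<le> (INF x\<in>datasets n. 1 / (\<Sum>t\<in>UNIV. exp_neg_len (inv_len n f x t) \<epsilon>))"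
    using pure_dp_min_accuracy_bound[OF assms(2)] by (blast intro: cINF_greatest)
next
  show "measure_pmf.prob (M x) {f x} \<le> 1 / (\<Sum>t\<in>UNIV. exp_neg_len (inv_len n f x t) (2 * \<epsilon>))"
    if "unbiased n L01 f M" "x \<in> datasets n" for x
    using pure_dp_unbiased_accuracy_bound[OF assms(2) that] .
qed

end
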